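(* Let $v\in\mathbb{C}$ and let $S$ be a fixed positive integer. As $n\to\infty$, \begin{align*} \int_{1/2}^{1}e^{n(1-z+\log z)}z^v\,dz&=\sum_{s=0}^{S-1}\Gamma\!\left(\frac{s+1}{2}\right)\frac{(-1)^s\beta_s(v)}{n^{(s+1)/2}}+O\!\left(\frac{1}{n^{(S+1)/2}}\right),\\ \int_{1}^{3/2}e^{n(1-z+\log z)}z^v\,dz&=\sum_{s=0}^{S-1}\Gamma\!\left(\frac{s+1}{2}\right)\frac{\beta_s(v)}{n^{(s+1)/2}}+O\!\left(\frac{1}{n^{(S+1)/2}}\right), \end{align*} where \[ \beta_s(v)=\sum_{m=0}^{s}(-1)^m\binom{v}{s-m}\sum_{k=0}^{m}2^{(s-1)/2+k}\binom{-(s+1)/2}{k}\mathcal{A}_{m,k}\!\left(\tfrac13,\tfrac14,\tfrac15,\dots\right). \]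
   Context: De Moivre polynomial $\mathcal{A}_{n,k}(a_1,a_2,\dots)$: coefficient of $x^n$ in $(a_1x+a_2x^2+\cdots)^k$. For complex $x$ and integer $j\geq0$, $\binom{x}{j}=x(x-1)\cdots(x-j+1)/j!$. $z^v=e^{v\log z}$ for $z>0$. *)

theory Defs
  imports "HOL-Analysis.Analysis" "HOL-Computational_Algebra.Formal_Power_Series"
          "HOL-Library.Landau_Symbols"
begin

definition de_moivre :: "nat \<Rightarrow> nat \<Rightarrow> (nat \<Rightarrow> complex) \<Rightarrow> complex" where
  "de_moivre n k a = fps_nth ((Abs_fps (\<lambda>j. if j = 0 then 0 else a j)) ^ k) n"

text \<open>beta_s(v); the sequence (1/3, 1/4, 1/5, ...) is a_j = 1/(j+2).\<close>
definition beta :: "nat \<Rightarrow> complex \<Rightarrow> complex" where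
  "beta s v = (\<Sum>m=0..s. (-1)^m * (v gchoose (s - m)) *
     (\<Sum>k=0..m. complex_of_real (2 powr ((real s - 1) / 2 + real k)) *
        ((- (of_nat s + 1) / 2 :: complex) gchoose k) *
        de_moivre m k (\<lambda>j. 1 / (of_nat j + 2))))"

end

theory Submission
  imports Defs "HOL-Complex_Analysis.Complex_Analysis" "HOL-Probability.Probability" "HOL-Real_Asymp.Real_Asymp"
begin

text \<open>
  Put \<open>z = 1 + x\<close>. The phase is \<open>1 - z + ln z = -(x - ln (1 + x)) = -w^2/2\<close> for the Gaussian
  coordinate \<open>w = x \<psi>(x)^(1/2)\<close>, where \<open>\<psi>(x) = 2 (x - ln (1 + x)) / x^2\<close> is analytic near \<open>0\<close>
  with \<open>\<psi>(0) = 1\<close>. Lagrange inversion expands \<open>(1 + x)^v = (\<Sum>s<S. c_s w^s dw/dx) + O(x^S)\<close>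
  with \<open>c_s = [x^s] \<psi>(x)^(-(s+1)/2) (1 + x)^v\<close>, and \<open>\<beta>_s(v) = 2^((s-1)/2) c_s\<close>.
  On either side of \<open>z = 1\<close> the substitution \<open>x \<mapsto> w\<close> turns the \<open>s\<close>-th term into a truncated
  Gaussian moment \<open>\<integral> w^s exp(-n w^2/2) dw\<close>, which equals \<open>\<Gamma>((s+1)/2) 2^((s-1)/2) / n^((s+1)/2)\<close>
  up to an exponentially small error; on the left side \<open>w\<close> is negative, which produces the sign
  \<open>(-1)^s\<close>. Since \<open>x - ln (1 + x) \<ge> x^2/3\<close> for \<open>\<bar>x\<bar> \<le> 1/2\<close>, the remainder contributes
  \<open>O(n^(-(S+1)/2))\<close>.
\<close>

section \<open>Lagrange inversion for formal power series\<close>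

definition fps_1p_powr :: "'a::field_char_0 fps \<Rightarrow> 'a \<Rightarrow> 'a fps" where
  "fps_1p_powr B a = fps_binomial a oo B"

lemma fps_1p_powr_0 [simp]: "fps_1p_powr B 0 = 1"
  by (simp add: fps_1p_powr_def)

lemma fps_1p_powr_nth_0 [simp]: "fps_1p_powr B a $ 0 = 1"
  by (simp add: fps_1p_powr_def)

lemma fps_1p_powr_add:
  fixes B :: "'a::field_char_0 fps"
  shows "B $ 0 = 0 \<Longrightarrow> fps_1p_powr B (a + b) = fps_1p_powr B a * fps_1p_powr B b"
  by (simp add: fps_1p_powr_def fps_binomial_add_mult fps_compose_mult_distrib)

lemma fps_1p_powr_power:
  fixes B :: "'a::field_char_0 fps"
  assumes "B $ 0 = 0"
  shows "fps_1p_powr B a ^ n = fps_1p_powr B (of_nat n * a)"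
  by (induction n) (simp_all add: fps_1p_powr_add[OF assms, symmetric] algebra_simps)

lemma fps_deriv_fps_binomial:
  "fps_deriv (fps_binomial a) = fps_const a * fps_binomial (a - 1)"
  by (rule fps_ext) (simp add: gbinomial_absorption[simplified])

lemma fps_deriv_fps_1p_powr:
  fixes B :: "'a::field_char_0 fps"
  assumes "B $ 0 = 0"
  shows "fps_deriv (fps_1p_powr B a) = fps_const a * fps_1p_powr B (a - 1) * fps_deriv B"
  using fps_compose_deriv[OF assms, of "fps_binomial a"]
  by (simp add: fps_1p_powr_def fps_deriv_fps_binomial fps_compose_mult_distrib[OF assms])

definition lagrange_var :: "'a::field_char_0 fps \<Rightarrow> 'a fps" where
  "lagrange_var B = fps_X * fps_1p_powr B (1/2)"

text \<open>With \<open>W = lagrange_var B\<close> and \<open>b = (j - s)/2\<close>, the product below equals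
  \<open>X^j (Q + X Q'/(2b))\<close> for \<open>Q = fps_1p_powr B b\<close>, whose coefficient of \<open>X^(s-j)\<close>,
  \<open>Q_r (1 + r/(2b))\<close> with \<open>r = s - j\<close>, vanishes for \<open>r > 0\<close>.\<close>
lemma lagrange_residue:
  fixes B :: "'a::field_char_0 fps"
  assumes B0: "B $ 0 = 0"
  shows "(fps_1p_powr B (- (of_nat s + 1) / 2) * (lagrange_var B ^ j * fps_deriv (lagrange_var B))) $ s
           = (if j = s then 1 else 0)"
proof -
  define P where "P = fps_1p_powr B"
  define b :: 'a where "b = (of_nat j - of_nat s) / 2"
  have W_power: "lagrange_var B ^ j = fps_X ^ j * P (of_nat j / 2)"
    by (simp add: lagrange_var_def P_def power_mult_distrib fps_1p_powr_power[OF B0])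
  have W_deriv: "fps_deriv (lagrange_var B) = P (1/2) + fps_X * (fps_const (1/2) * P (-1/2) * fps_deriv B)"
    by (simp add: lagrange_var_def P_def fps_deriv_fps_1p_powr[OF B0])
  have "P b = P (- (of_nat s + 1) / 2 + of_nat j / 2 + 1/2)"
    by (rule arg_cong[of _ _ P]) (simp add: b_def field_simps)
  then have "P b = P (- (of_nat s + 1) / 2) * P (of_nat j / 2) * P (1/2)"
    by (simp only: P_def fps_1p_powr_add[OF B0])
  moreover have "P (b - 1) = P (- (of_nat s + 1) / 2 + of_nat j / 2 + -1/2)"
    by (rule arg_cong[of _ _ P]) (simp add: b_def field_simps)
  then have "P (b - 1) = P (- (of_nat s + 1) / 2) * P (of_nat j / 2) * P (-1/2)"
    by (simp only: P_def fps_1p_powr_add[OF B0])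
  ultimately have prod: "P (- (of_nat s + 1) / 2) * (lagrange_var B ^ j * fps_deriv (lagrange_var B))
      = fps_X ^ j * (P b + fps_X * (fps_const (1/2) * P (b - 1) * fps_deriv B))"
    unfolding W_power W_deriv by (simp add: algebra_simps)
  have "(fps_X ^ j * (P b + fps_X * (fps_const (1/2) * P (b - 1) * fps_deriv B))) $ s
          = (if j = s then 1 else 0)"
  proof (cases "j < s")
    case True
    define r where "r = s - j"
    have s: "s = j + r" and r: "r > 0" using True by (auto simp: r_def)
    have b: "2 * b = - of_nat r" using s by (simp add: b_def field_simps)
    then have "b \<noteq> 0" using r by auto
    then have "fps_const (1/2) * P (b - 1) * fps_deriv B = fps_const (1 / (2 * b)) * fps_deriv (P b)"
      by (simp add: P_def fps_deriv_fps_1p_powr[OF B0] fps_const_mult[symmetric] mult.assoc[symmetric])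
    then have "(fps_const (1/2) * P (b - 1) * fps_deriv B) $ (r - 1) = - (P b $ r)"
      using r b by (simp add: field_simps)
    then show ?thesis using s r by (simp add: fps_X_power_mult_nth)
  qed (auto simp: fps_X_power_mult_nth P_def)
  then show ?thesis by (simp only: prod[unfolded P_def] P_def)
qed

definition lagrange_coeff :: "'a::field_char_0 fps \<Rightarrow> 'a fps \<Rightarrow> nat \<Rightarrow> 'a" where
  "lagrange_coeff B F s = (fps_1p_powr B (- (of_nat s + 1) / 2) * F) $ s"

lemma lagrange_expansion_remainder_nth:
  fixes B F :: "'a::field_char_0 fps"
  assumes B0: "B $ 0 = 0" and "j < S"
  shows "(F - (\<Sum>s<S. fps_const (lagrange_coeff B F s) * (lagrange_var B ^ s * fps_deriv (lagrange_var B)))) $ j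
           = 0"
  using \<open>j < S\<close>
proof (induction j rule: less_induct)
  case (less j)
  define R where
    "R = F - (\<Sum>s<S. fps_const (lagrange_coeff B F s) * (lagrange_var B ^ s * fps_deriv (lagrange_var B)))"
  define P where "P = fps_1p_powr B (- (of_nat j + 1) / 2)"
  have "P * R = P * F - (\<Sum>s<S. fps_const (lagrange_coeff B F s) *
                   (P * (lagrange_var B ^ s * fps_deriv (lagrange_var B))))"
    by (simp add: R_def right_diff_distrib sum_distrib_left mult.left_commute)
  then have "(P * R) $ j = lagrange_coeff B F j -
      (\<Sum>s<S. lagrange_coeff B F s * (P * (lagrange_var B ^ s * fps_deriv (lagrange_var B))) $ j)"
    by (simp add: P_def lagrange_coeff_def fps_sum_nth)
  also have "\<dots> = lagrange_coeff B F j - (\<Sum>s<S. lagrange_coeff B F s * (if s = j then 1 else 0))"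
    by (simp only: P_def lagrange_residue[OF B0])
  also have "\<dots> = 0" using less.prems by (simp add: if_distrib sum.delta' cong: if_cong)
  finally have "(P * R) $ j = 0" .
  moreover have "(P * R) $ j = (\<Sum>i\<in>{0}. P $ i * R $ (j - i))"
    unfolding fps_mult_nth using less by (intro sum.mono_neutral_right) (auto simp: R_def)
  ultimately show ?case by (simp add: P_def R_def)
qed

lemma has_fps_expansion_bigo_power:
  fixes f :: "'a::{banach, real_normed_field} \<Rightarrow> 'a" and F :: "'a fps"
  assumes f: "f has_fps_expansion F" and F: "\<And>j. j < S \<Longrightarrow> F $ j = 0"
  shows "f \<in> O[at 0](\<lambda>z. z ^ S)"
proof (rule bigoI_tendsto)
  define G where "G = fps_shift S F"
  have FG: "F = G * fps_X ^ S"
    by (rule fps_ext) (simp add: G_def fps_X_power_mult_right_nth F)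
  have r: "0 < fps_conv_radius G"
    using f by (simp add: G_def has_fps_expansion_def)
  have "eventually (\<lambda>z. z \<in> eball 0 (fps_conv_radius G)) (nhds 0)"
    using r by (intro eventually_nhds_in_open) (auto simp: zero_ereal_def)
  moreover have "eventually (\<lambda>z. eval_fps F z = f z) (nhds 0)"
    using f by (simp add: has_fps_expansion_def)
  ultimately have "eventually (\<lambda>z. eval_fps G z = f z / z ^ S) (at 0)"
    unfolding eventually_at_filter
    by eventually_elim (auto simp: FG eval_fps_mult field_simps)
  moreover have "(eval_fps G \<longlongrightarrow> eval_fps G 0) (at 0)"
    using continuous_eval_fps[of 0 G UNIV] r by (simp add: continuous_def zero_ereal_def)
  ultimately show "((\<lambda>z. f z / z ^ S) \<longlongrightarrow> eval_fps G 0) (at 0)"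
    by (rule Lim_transform_eventually[rotated])
  show "eventually (\<lambda>z. z ^ S \<noteq> 0) (at (0::'a))"
    unfolding eventually_at_filter by (rule always_eventually) simp
qed

section \<open>The phase function and the Gaussian coordinate\<close>

text \<open>The Taylor series of \<open>\<psi>(x) = 2 (x - ln (1 + x)) / x\<^sup>2\<close>.\<close>
definition psi_fps :: "complex fps" where
  "psi_fps = Abs_fps (\<lambda>j. 2 * (-1) ^ j / (of_nat j + 2))"

abbreviation laplace_coeff :: "complex \<Rightarrow> nat \<Rightarrow> complex" where
  "laplace_coeff v \<equiv> lagrange_coeff (psi_fps - 1) (fps_binomial v)"

lemma psi_fps_minus_1_power_nth:
  "((psi_fps - 1) ^ k) $ m = 2 ^ k * (-1) ^ m * de_moivre m k (\<lambda>j. 1 / (of_nat j + 2))"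
proof -
  define G :: "complex fps" where "G = Abs_fps (\<lambda>j. if j = 0 then 0 else 1 / (of_nat j + 2))"
  have "psi_fps - 1 = fps_const 2 * (G oo - fps_X)"
    by (rule fps_ext) (simp add: psi_fps_def G_def fps_compose_uminus')
  then have "(psi_fps - 1) ^ k = fps_const (2 ^ k) * (G ^ k oo - fps_X)"
    by (simp add: power_mult_distrib fps_compose_power[symmetric])
  then show ?thesis
    by (simp add: fps_compose_uminus' de_moivre_def G_def)
qed

lemma beta_eq_laplace_coeff:
  "beta s v = of_real (2 powr ((real s - 1) / 2)) * laplace_coeff v s"
proof -
  have "laplace_coeff v s =
      (\<Sum>m=0..s. (\<Sum>k=0..m. ((- (of_nat s + 1) / 2) gchoose k) *
        (2 ^ k * (-1) ^ m * de_moivre m k (\<lambda>j. 1 / (of_nat j + 2)))) * (v gchoose (s - m)))"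
    by (simp add: lagrange_coeff_def fps_mult_nth fps_1p_powr_def fps_compose_nth
        psi_fps_minus_1_power_nth)
  then show ?thesis
    unfolding beta_def
    by (simp add: sum_distrib_left sum_distrib_right powr_add powr_realpow algebra_simps)
qed

lemma psi_fps_sums:
  assumes "norm z < 1" "z \<noteq> 0"
  shows "(\<lambda>n. psi_fps $ n * z ^ n) sums (2 * (z - ln (1 + z)) / z\<^sup>2)"
proof -
  define f where "f n = - ((-z) ^ n) / of_nat n" for n
  have "f sums ln (1 + z)"
    unfolding f_def using assms(1) by (rule Ln_series')
  then have "(\<lambda>n. f (n + 2)) sums (ln (1 + z) - z)"
    by (subst sums_iff_shift) (simp_all add: f_def numeral_2_eq_2)
  then have "(\<lambda>n. (- 2 / z\<^sup>2) * f (n + 2)) sums ((- 2 / z\<^sup>2) * (ln (1 + z) - z))"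
    by (rule sums_mult)
  moreover have coeff: "(- 2 / z\<^sup>2) * f (n + 2) = psi_fps $ n * z ^ n" for n
  proof -
    have "of_nat n + 2 \<noteq> (0::complex)"
      using of_nat_eq_0_iff[of "n + 2", where 'a = complex] by (simp add: add.commute)
    then show ?thesis
      using assms(2) by (simp add: f_def psi_fps_def power_add power_minus' field_simps power2_eq_square)
  qed
  moreover have "(- 2 / z\<^sup>2) * (ln (1 + z) - z) = 2 * (z - ln (1 + z)) / z\<^sup>2"
    using assms(2) by (simp add: field_simps)
  ultimately show ?thesis
    by (simp only: coeff)
qed

lemma fps_conv_radius_psi_fps: "1 \<le> fps_conv_radius psi_fps"
  unfolding fps_conv_radius_def
  by (rule conv_radius_geI_ex') (use psi_fps_sums in \<open>auto simp: sums_iff\<close>)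

lemma psi_fps_nth_0 [simp]: "psi_fps $ 0 = 1"
  by (simp add: psi_fps_def)

definition psi :: "complex \<Rightarrow> complex" where
  "psi = eval_fps psi_fps"

lemma psi_has_fps_expansion: "psi has_fps_expansion psi_fps"
  unfolding psi_def using fps_conv_radius_psi_fps
  by (intro eval_fps_has_fps_expansion) (auto intro: less_le_trans[of 0 1])

lemma psi_mult_square:
  assumes "norm z < 1"
  shows "psi z * z\<^sup>2 = 2 * (z - ln (1 + z))"
proof (cases "z = 0")
  case False
  then show ?thesis
    using psi_fps_sums[OF assms False] by (simp add: psi_def eval_fps_def sums_iff)
qed simp

definition gauss_coord :: "complex \<Rightarrow> complex" where
  "gauss_coord z = z * psi z powr (1/2)"

lemma gauss_coord_has_fps_expansion: "gauss_coord has_fps_expansion lagrange_var (psi_fps - 1)"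
proof -
  have "(\<lambda>z. psi z - 1) has_fps_expansion psi_fps - 1"
    by (intro fps_expansion_intros psi_has_fps_expansion)
  then have "((\<lambda>x. (1 + x) powr (1/2)) \<circ> (\<lambda>z. psi z - 1)) has_fps_expansion fps_1p_powr (psi_fps - 1) (1/2)"
    unfolding fps_1p_powr_def
    by (rule has_fps_expansion_compose[OF has_fps_expansion_binomial_complex]) simp
  then have "(\<lambda>z. z * psi z powr (1/2)) has_fps_expansion lagrange_var (psi_fps - 1)"
    unfolding lagrange_var_def by (intro fps_expansion_intros) (simp add: o_def)
  then show ?thesis
    by (simp add: gauss_coord_def[abs_def])
qed

definition binomial_remainder :: "complex \<Rightarrow> nat \<Rightarrow> complex \<Rightarrow> complex" where
  "binomial_remainder v S z =
     (1 + z) powr v - (\<Sum>s<S. laplace_coeff v s * (gauss_coord z ^ s * deriv gauss_coord z))"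

lemma binomial_remainder_bigo: "binomial_remainder v S \<in> O[at 0](\<lambda>z. z ^ S)"
  unfolding binomial_remainder_def[abs_def]
proof (rule has_fps_expansion_bigo_power)
  show "(\<lambda>z. (1 + z) powr v - (\<Sum>s<S. laplace_coeff v s * (gauss_coord z ^ s * deriv gauss_coord z)))
      has_fps_expansion fps_binomial v - (\<Sum>s<S. fps_const (laplace_coeff v s) *
        (lagrange_var (psi_fps - 1) ^ s * fps_deriv (lagrange_var (psi_fps - 1))))"
    by (intro fps_expansion_intros gauss_coord_has_fps_expansion)
qed (rule lagrange_expansion_remainder_nth; simp)

definition phi :: "real \<Rightarrow> real" where
  "phi x = x - ln (1 + x)"

lemma phi_ge_square:
  assumes "\<bar>x\<bar> \<le> 1/2"
  shows "x\<^sup>2 / 3 \<le> phi x"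
proof -
  define h where "h y = phi y - y\<^sup>2 / 3" for y
  have h': "DERIV h y :> y * (1 - 2 * y) / (3 * (1 + y))" if "\<bar>y\<bar> \<le> 1/2" for y
  proof -
    have "1 + y > 0" using that by linarith
    then show ?thesis
      unfolding h_def[abs_def] phi_def
      by (auto intro!: derivative_eq_intros simp: field_simps power2_eq_square)
  qed
  have "h 0 \<le> h x"
  proof (cases "0 \<le> x")
    case True
    show ?thesis
    proof (rule DERIV_nonneg_imp_nondecreasing[of 0 x h, OF True])
      fix y assume "0 \<le> y" "y \<le> x"
      then show "\<exists>d. DERIV h y :> d \<and> 0 \<le> d"
        using assms h'[of y] by (intro exI[of _ "y * (1 - 2 * y) / (3 * (1 + y))"]) auto
    qed
  next
    case False
    show ?thesis
    proof (rule DERIV_nonpos_imp_nonincreasing[of x 0 h])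
      fix y assume "x \<le> y" "y \<le> 0"
      then show "\<exists>d. DERIV h y :> d \<and> d \<le> 0"
        using assms h'[of y]
        by (intro exI[of _ "y * (1 - 2 * y) / (3 * (1 + y))"])
           (auto simp: divide_nonpos_pos mult_nonpos_nonneg)
    qed (use False in auto)
  qed
  then show ?thesis by (simp add: h_def phi_def)
qed

lemma ln_one_plus_of_real:
  "1 + x > 0 \<Longrightarrow> ln (1 + complex_of_real x) = of_real (ln (1 + x))"
  using Ln_of_real[of "1 + x"] by simp

lemma gauss_coord_of_real:
  assumes x: "\<bar>x\<bar> \<le> 1/2"
  shows "gauss_coord (of_real x) = of_real (sgn x * sqrt (2 * phi x))"
proof (cases "x = 0")
  case False
  define p where "p = 2 * phi x / x\<^sup>2"
  have p: "p > 0"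
  proof -
    have "0 < x\<^sup>2 / 3" using False by simp
    then have "0 < phi x" using phi_ge_square[OF x] by linarith
    then show ?thesis using False by (simp add: p_def)
  qed
  have "psi (of_real x) * (of_real x)\<^sup>2 = 2 * (of_real x - ln (1 + of_real x))"
    using x by (intro psi_mult_square) simp
  also have "\<dots> = of_real (2 * phi x)"
    using x by (simp add: phi_def ln_one_plus_of_real)
  finally have "psi (of_real x) = of_real p"
    using False by (simp add: p_def eq_divide_eq)
  moreover have "complex_of_real p powr (1/2) = of_real (sqrt p)"
    using powr_of_real[of p "1/2"] p by (simp add: powr_half_sqrt)
  moreover have "x * sqrt p = sgn x * sqrt (2 * phi x)"
    using False by (simp add: p_def real_sqrt_divide sgn_if)
  ultimately show ?thesis
    by (simp add: gauss_coord_def flip: of_real_mult)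
qed (simp add: gauss_coord_def)

section \<open>Gaussian moments\<close>

definition gauss_moment :: "nat \<Rightarrow> real \<Rightarrow> real" where
  "gauss_moment s a = Gamma ((real s + 1) / 2) / (2 * a powr ((real s + 1) / 2))"

lemma gauss_moment_scale:
  "c > 0 \<Longrightarrow> x > 0 \<Longrightarrow> gauss_moment s (x * c) = gauss_moment s c / x powr ((real s + 1) / 2)"
  by (simp add: gauss_moment_def powr_mult field_simps)

lemma Gamma_nat_plus_half: "Gamma (real k + 1/2) = sqrt pi * fact (2 * k) / (4 ^ k * fact k)"
proof (induction k)
  case 0
  then show ?case by (simp add: Gamma_one_half_real)
next
  case (Suc k)
  have "real k + 1/2 \<notin> \<int>\<^sub>\<le>\<^sub>0"
    using nonpos_Ints_nonpos[of "real k + 1/2"] by force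
  then have "Gamma (real (Suc k) + 1/2) = (real k + 1/2) * Gamma (real k + 1/2)"
    using Gamma_plus1[of "real k + 1/2"] by (simp add: algebra_simps)
  also have "\<dots> = (real k + 1/2) * (sqrt pi * fact (2 * k) / (4 ^ k * fact k))"
    by (simp only: Suc)
  also have "\<dots> = sqrt pi * fact (2 * Suc k) / (4 ^ Suc k * fact (Suc k))"
  proof -
    have f1: "fact (2 * Suc k) = (2 * real k + 2) * ((2 * real k + 1) * fact (2 * k))"
      by (simp add: fact_Suc algebra_simps)
    have f2: "fact (Suc k) = (real k + 1) * fact k"
      by (simp add: fact_Suc algebra_simps)
    have "(real k + 1/2) * (sqrt pi * fact (2 * k) / (4 ^ k * fact k)) * (4 ^ Suc k * fact (Suc k))
        = sqrt pi * fact (2 * Suc k)"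
      unfolding f1 f2 by (simp add: field_simps)
    then show ?thesis
      by (simp add: eq_divide_eq)
  qed
  finally show ?case .
qed

lemma gaussian_moment_pos_Gamma:
  "has_bochner_integral lborel (\<lambda>x. indicator {0..} x *\<^sub>R (exp (- x\<^sup>2) * x ^ s))
     (Gamma ((real s + 1) / 2) / 2)"
proof (cases "even s")
  case True
  then obtain k where s: "s = 2 * k" by (auto elim: evenE)
  have "(real (2 * k) + 1) / 2 = real k + 1/2" by simp
  then have "Gamma ((real (2 * k) + 1) / 2) / 2 = sqrt pi / 2 * (fact (2 * k) / (2 ^ (2 * k) * fact k))"
    by (simp only: Gamma_nat_plus_half) (simp add: power_mult)
  then show ?thesis
    unfolding s by (simp only: gaussian_moment_even_pos)
next
  case False
  then obtain k where s: "s = 2 * k + 1" by (auto elim: oddE)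
  have "(real (2 * k + 1) + 1) / 2 = 1 + real k" by simp
  then have "Gamma ((real (2 * k + 1) + 1) / 2) / 2 = fact k / 2"
    by (simp only: Gamma_fact)
  then show ?thesis
    unfolding s by (simp only: gaussian_moment_odd_pos)
qed

lemma has_bochner_integral_gauss_moment:
  assumes "a > 0"
  shows "has_bochner_integral lborel (\<lambda>w. indicator {0..} w *\<^sub>R (exp (- a * w\<^sup>2) * w ^ s))
           (gauss_moment s a)"
proof -
  define c where "c = sqrt a"
  have c: "c > 0" "c\<^sup>2 = a"
    using assms by (simp_all add: c_def)
  have "a powr ((real s + 1) / 2) = (a powr (1/2)) powr real (s + 1)"
    by (simp add: powr_powr algebra_simps)
  also have "\<dots> = (a powr (1/2)) ^ (s + 1)"
    using assms by (intro powr_realpow) simp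
  also have "\<dots> = c ^ (s + 1)"
    using assms by (simp add: c_def powr_half_sqrt)
  finally have a_powr: "a powr ((real s + 1) / 2) = c ^ (s + 1)" .
  define f where "f = (\<lambda>x::real. indicator {0..} x *\<^sub>R (exp (- x\<^sup>2) * x ^ s))"
  have "has_bochner_integral lborel (\<lambda>x. f (0 + c * x)) ((Gamma ((real s + 1) / 2) / 2) /\<^sub>R \<bar>c\<bar>)"
    using gaussian_moment_pos_Gamma[of s] c unfolding f_def[symmetric]
    by (subst lborel_has_bochner_integral_real_affine_iff[symmetric]) auto
  then have "has_bochner_integral lborel (\<lambda>x. f (0 + c * x) / c ^ s)
      ((Gamma ((real s + 1) / 2) / 2) /\<^sub>R \<bar>c\<bar> / c ^ s)"
    by (rule has_bochner_integral_divide_zero)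
  moreover have "f (0 + c * x) / c ^ s = indicator {0..} x *\<^sub>R (exp (- a * x\<^sup>2) * x ^ s)" for x
  proof -
    have "indicator {0..} (c * x) = (indicator {0..} x :: real)"
      using c by (auto simp: indicator_def zero_le_mult_iff)
    then show ?thesis
      using c by (simp add: f_def power_mult_distrib)
  qed
  moreover have "(Gamma ((real s + 1) / 2) / 2) /\<^sub>R \<bar>c\<bar> / c ^ s = gauss_moment s a"
    unfolding gauss_moment_def a_powr using c by (simp add: field_simps)
  ultimately show ?thesis
    by simp
qed

lemma has_integral_gauss_moment:
  assumes "a > 0"
  shows "((\<lambda>w. exp (- a * w\<^sup>2) * w ^ s) has_integral gauss_moment s a) {0..}"
proof -
  note I = has_bochner_integral_gauss_moment[OF assms, of s]
  have "((\<lambda>w. indicator {0..} w *\<^sub>R (exp (- a * w\<^sup>2) * w ^ s)) has_integral gauss_moment s a) UNIV"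
    using has_integral_integral_lborel[OF integrable.intros[OF I]]
    unfolding has_bochner_integral_integral_eq[OF I] .
  also have "(\<lambda>w. indicator {0..} w *\<^sub>R (exp (- a * w\<^sup>2) * w ^ s))
      = (\<lambda>w. if w \<in> {0..} then exp (- a * w\<^sup>2) * w ^ s else 0)"
    by (simp add: indicator_def fun_eq_iff)
  finally show ?thesis
    unfolding has_integral_restrict_UNIV .
qed

lemma integral_gauss_truncated_le:
  assumes "a > 0"
  shows "integral {0..G} (\<lambda>w. exp (- a * w\<^sup>2) * w ^ s) \<le> gauss_moment s a"
proof (rule has_integral_subset_le[OF _ _ has_integral_gauss_moment[OF assms]])
  show "((\<lambda>w. exp (- a * w\<^sup>2) * w ^ s) has_integral
      integral {0..G} (\<lambda>w. exp (- a * w\<^sup>2) * w ^ s)) {0..G}"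
    by (intro integrable_integral integrable_continuous_interval continuous_intros)
qed auto

lemma gauss_truncation_error:
  assumes "0 < b" "b \<le> a" "0 \<le> G"
  shows "\<bar>gauss_moment s a - integral {0..G} (\<lambda>w. exp (- a * w\<^sup>2) * w ^ s)\<bar>
           \<le> exp (- (a - b) * G\<^sup>2) * gauss_moment s b"
proof -
  define f where "f = (\<lambda>c w::real. exp (- c * w\<^sup>2) * w ^ s)"
  define tail where "tail w = f a w - (if w \<in> {0..G} then f a w else 0)" for w
  have sub: "{0..G} \<subseteq> {0::real..}" by auto
  have "((\<lambda>w. if w \<in> {0..G} then f a w else 0) has_integral integral {0..G} (f a)) {0..}"
    unfolding has_integral_restrict[OF sub] f_def by (intro integrable_integral integrable_continuous_interval continuous_intros)
  then have tail: "(tail has_integral gauss_moment s a - integral {0..G} (f a)) {0..}"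
    unfolding tail_def f_def using assms by (intro has_integral_diff has_integral_gauss_moment) auto
  have dominant: "((\<lambda>w. exp (- (a - b) * G\<^sup>2) * f b w) has_integral
      exp (- (a - b) * G\<^sup>2) * gauss_moment s b) {0..}"
    unfolding f_def using assms by (intro has_integral_mult_right has_integral_gauss_moment)
  have tail_bounds: "0 \<le> tail w \<and> tail w \<le> exp (- (a - b) * G\<^sup>2) * f b w" if "w \<in> {0..}" for w
  proof (cases "w \<le> G")
    case True
    then have "tail w = 0"
      using that by (simp add: tail_def)
    then show ?thesis
      using that by (simp add: f_def)
  next
    case False
    then have "(a - b) * G\<^sup>2 \<le> (a - b) * w\<^sup>2"
      using assms by (intro mult_left_mono power_mono) auto
    then have "exp (- a * w\<^sup>2) \<le> exp (- (a - b) * G\<^sup>2) * exp (- b * w\<^sup>2)"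
      by (simp add: exp_add[symmetric] algebra_simps)
    then have "exp (- a * w\<^sup>2) * w ^ s \<le> exp (- (a - b) * G\<^sup>2) * exp (- b * w\<^sup>2) * w ^ s"
      using that by (intro mult_right_mono) auto
    then show ?thesis
      using that False by (simp add: tail_def f_def mult.assoc)
  qed
  have "0 \<le> gauss_moment s a - integral {0..G} (f a)"
    by (rule has_integral_nonneg[OF tail]) (use tail_bounds in blast)
  moreover have "gauss_moment s a - integral {0..G} (f a) \<le> exp (- (a - b) * G\<^sup>2) * gauss_moment s b"
    by (rule has_integral_le[OF tail dominant]) (use tail_bounds in blast)
  ultimately show ?thesis
    unfolding f_def by linarith
qed

lemma gauss_truncation_bigo:
  assumes "G > 0"
  shows "(\<lambda>n::nat. gauss_moment s (real n / 2) - integral {0..G} (\<lambda>w. exp (- (real n / 2) * w\<^sup>2) * w ^ s))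
           \<in> O(\<lambda>n. 1 / real n powr p)"
proof -
  have "(\<lambda>n::nat. gauss_moment s (real n / 2) - integral {0..G} (\<lambda>w. exp (- (real n / 2) * w\<^sup>2) * w ^ s))
      \<in> O(\<lambda>n. exp (- (real n / 2 - 1/2) * G\<^sup>2))"
  proof (rule bigoI)
    show "eventually (\<lambda>n. norm (gauss_moment s (real n / 2) -
        integral {0..G} (\<lambda>w. exp (- (real n / 2) * w\<^sup>2) * w ^ s))
        \<le> gauss_moment s (1/2) * norm (exp (- (real n / 2 - 1/2) * G\<^sup>2))) at_top"
      using eventually_ge_at_top[of 1]
    proof eventually_elim
      case (elim n)
      then show ?case
        using gauss_truncation_error[of "1/2" "real n / 2" G s] assms by (simp add: mult.commute)
    qed
  qed
  also have "(\<lambda>n::nat. exp (- (real n / 2 - 1/2) * G\<^sup>2)) \<in> O(\<lambda>n. 1 / real n powr p)"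
    using assms by real_asymp
  finally show ?thesis .
qed

lemma Gamma_beta_term_eq_gauss_moment:
  assumes "n > 0"
  shows "complex_of_real (Gamma ((real s + 1) / 2)) * c * beta s v / of_real (real n powr ((real s + 1) / 2))
       = laplace_coeff v s * c * of_real (gauss_moment s (real n / 2))"
proof -
  have "(real s + 1) / 2 = (real s - 1) / 2 + 1"
    by (simp add: field_simps)
  then have "2 powr ((real s + 1) / 2) = 2 powr ((real s - 1) / 2) * 2"
    by (simp only: powr_add) simp
  then have "gauss_moment s (real n / 2)
      = Gamma ((real s + 1) / 2) * 2 powr ((real s - 1) / 2) / real n powr ((real s + 1) / 2)"
    using assms by (simp add: gauss_moment_def powr_divide field_simps)
  then show ?thesis
    unfolding beta_eq_laplace_coeff by (simp add: field_simps)
qed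

section \<open>Laplace's method on either side of the saddle point\<close>

lemma integral_shift_real:
  fixes f :: "real \<Rightarrow> 'a::banach"
  shows "integral {a..b} (\<lambda>t. f (c + t)) = integral {c + a..c + b} f"
  using integral_shift_Icc_real[of a b f c] by (simp add: o_def add.commute)

lemma integral_reflect_shift_real:
  fixes f :: "real \<Rightarrow> 'a::banach"
  shows "integral {a..b} (\<lambda>t. f (c - t)) = integral {c - b..c - a} f"
proof -
  have "integral {a..b} (\<lambda>t. f (c - t)) = integral {-b..-a} (\<lambda>t. f (c + t))"
    using Henstock_Kurzweil_Integration.integral_reflect_real[of b a "\<lambda>t. f (c - t)"] by simp
  also have "\<dots> = integral {c - b..c - a} f"
    by (simp add: integral_shift_real)
  finally show ?thesis .
qed

definition laplace_integrand :: "complex \<Rightarrow> nat \<Rightarrow> real \<Rightarrow> complex" where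
  "laplace_integrand v n z = of_real (exp (real n * (1 - z + ln z))) * of_real z powr v"

lemma continuous_on_laplace_integrand: "continuous_on {0<..} (laplace_integrand v n)"
  unfolding laplace_integrand_def[abs_def]
  by (intro continuous_intros) auto

text \<open>The integrals over \<open>[1/2, 1]\<close> and \<open>[1, 3/2]\<close> are treated together by writing
  \<open>z = 1 + \<sigma> t\<close> with \<open>\<sigma> = -1\<close> resp. \<open>\<sigma> = 1\<close> and \<open>t \<in> [0, 1/2]\<close>.\<close>
locale laplace_side =
  fixes \<sigma> :: real
  assumes sign: "\<sigma> = 1 \<or> \<sigma> = -1"
begin

lemma sign_nonzero [simp]: "\<sigma> \<noteq> 0"
  using sign by auto

lemma sign_square [simp]: "\<sigma> * \<sigma> = 1"
  using sign by auto

lemma sign_power2 [simp]: "\<sigma>\<^sup>2 = 1"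
  using sign by auto

lemma abs_sign [simp]: "\<bar>\<sigma>\<bar> = 1"
  using sign by auto

lemma abs_sign_mult [simp]: "\<bar>\<sigma> * t\<bar> = \<bar>t\<bar>"
  by (simp add: abs_mult)

lemma one_plus_sign_pos: "t \<in> {0..1/2} \<Longrightarrow> 1 + \<sigma> * t > 0"
  using sign by auto

definition gauss_var :: "real \<Rightarrow> real" where
  "gauss_var t = sqrt (2 * phi (\<sigma> * t))"

text \<open>The value at \<open>0\<close> is the limit of the quotient, so that the Taylor remainder below
  vanishes at \<open>0\<close>.\<close>
definition gauss_var' :: "real \<Rightarrow> real" where
  "gauss_var' t = (if t = 0 then 1 else t / ((1 + \<sigma> * t) * gauss_var t))"

lemma phi_sign_ge: "t \<in> {0..1/2} \<Longrightarrow> t\<^sup>2 / 3 \<le> phi (\<sigma> * t)"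
  using phi_ge_square[of "\<sigma> * t"] by (simp add: power_mult_distrib)

lemma phi_sign_pos:
  assumes "t \<in> {0<..1/2}"
  shows "phi (\<sigma> * t) > 0"
proof -
  have "0 < t\<^sup>2 / 3" using assms by simp
  also have "\<dots> \<le> phi (\<sigma> * t)" using assms by (intro phi_sign_ge) auto
  finally show ?thesis .
qed

lemma gauss_var_square: "t \<in> {0..1/2} \<Longrightarrow> (gauss_var t)\<^sup>2 = 2 * phi (\<sigma> * t)"
  using phi_sign_pos[of t] by (cases "t = 0") (auto simp: gauss_var_def phi_def)

lemma gauss_var_pos: "t \<in> {0<..1/2} \<Longrightarrow> gauss_var t > 0"
  using phi_sign_pos[of t] by (simp add: gauss_var_def)

lemma gauss_var_0 [simp]: "gauss_var 0 = 0"
  by (simp add: gauss_var_def phi_def)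

lemma continuous_on_gauss_var: "continuous_on {0..1/2} gauss_var"
  unfolding gauss_var_def[abs_def] phi_def using one_plus_sign_pos
  by (intro continuous_intros) (use one_plus_sign_pos in force)+

lemma gauss_var_has_derivative:
  assumes t: "t \<in> {0<..1/2}"
  shows "(gauss_var has_real_derivative gauss_var' t) (at t)"
proof -
  have pos: "1 + \<sigma> * t > 0" "gauss_var t > 0" "2 * (\<sigma> * t - ln (1 + \<sigma> * t)) > 0"
    using one_plus_sign_pos[of t] gauss_var_pos[OF t] phi_sign_pos[OF t] t by (auto simp: phi_def)
  have "((\<lambda>t. sqrt (2 * (\<sigma> * t - ln (1 + \<sigma> * t)))) has_real_derivative
      2 * (\<sigma> - \<sigma> / (1 + \<sigma> * t)) / (2 * sqrt (2 * (\<sigma> * t - ln (1 + \<sigma> * t))))) (at t)"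
    using pos by (auto intro!: derivative_eq_intros simp: field_simps)
  moreover have "\<sigma> - \<sigma> / (1 + \<sigma> * t) = (\<sigma> * \<sigma>) * t / (1 + \<sigma> * t)"
    using pos by (simp add: field_simps)
  ultimately show ?thesis
    using t pos by (simp add: gauss_var_def[abs_def] gauss_var'_def phi_def)
qed

lemma gauss_coord_sign:
  assumes "t \<in> {0..1/2}"
  shows "gauss_coord (of_real (\<sigma> * t)) = of_real (\<sigma> * gauss_var t)"
proof -
  have "sgn (\<sigma> * t) * sqrt (2 * phi (\<sigma> * t)) = \<sigma> * gauss_var t"
    using sign assms by (cases "t = 0") (auto simp: gauss_var_def phi_def sgn_mult)
  then show ?thesis
    using assms gauss_coord_of_real[of "\<sigma> * t"] by simp
qed

lemma deriv_gauss_coord_sign: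
  obtains d where "0 < d" "d \<le> 1/2"
    "\<And>t. 0 < t \<Longrightarrow> t < d \<Longrightarrow> deriv gauss_coord (of_real (\<sigma> * t)) = of_real (gauss_var' t)"
proof -
  obtain S where S: "open S" "0 \<in> S" "gauss_coord holomorphic_on S"
    using has_fps_expansion_imp_holomorphic[OF gauss_coord_has_fps_expansion] by metis
  then obtain d0 where d0: "d0 > 0" "ball 0 d0 \<subseteq> S"
    using open_contains_ball by blast
  define d where "d = min d0 (1/2)"
  have "deriv gauss_coord (of_real (\<sigma> * t)) = of_real (gauss_var' t)" if t: "0 < t" "t < d" for t
  proof -
    let ?D = "deriv gauss_coord (of_real (\<sigma> * t))"
    have "norm (of_real (\<sigma> * t) :: complex) < d0"
      using t by (simp add: d_def norm_mult)
    then have "of_real (\<sigma> * t) \<in> S"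
      using d0 mem_ball_0 by blast
    then have "(gauss_coord has_field_derivative ?D) (at (of_real (\<sigma> * t)))"
      using S by (intro holomorphic_derivI) auto
    then have "((\<lambda>z. gauss_coord (of_real \<sigma> * z)) has_field_derivative ?D * of_real \<sigma>) (at (of_real t))"
      by (intro DERIV_chain2[where f = gauss_coord]) (auto intro!: derivative_eq_intros)
    then have "((\<lambda>r. gauss_coord (of_real \<sigma> * of_real r)) has_vector_derivative ?D * of_real \<sigma>) (at t)"
      by (rule has_vector_derivative_real_field)
    moreover have "((\<lambda>r. of_real (\<sigma> * gauss_var r)) has_vector_derivative of_real (\<sigma> * gauss_var' t)) (at t)"
      using t by (intro has_vector_derivative_of_real DERIV_cmult gauss_var_has_derivative)
        (auto simp: d_def)
    then have "((\<lambda>r. gauss_coord (of_real \<sigma> * of_real r)) has_vector_derivative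
        of_real (\<sigma> * gauss_var' t)) (at t)"
      by (rule has_vector_derivative_transform_within_open[where S = "{0<..<1/2}"])
        (use t gauss_coord_sign in \<open>auto simp: d_def\<close>)
    ultimately have "?D * of_real \<sigma> = of_real (\<sigma> * gauss_var' t)"
      by (rule vector_derivative_unique_at)
    then have "?D * of_real (\<sigma> * \<sigma>) = of_real (\<sigma> * \<sigma> * gauss_var' t)"
      by (metis (no_types, lifting) mult.assoc mult.commute of_real_mult)
    then show ?thesis
      by simp
  qed
  then show thesis
    using that[of d] d0 by (auto simp: d_def)
qed

definition remainder :: "complex \<Rightarrow> nat \<Rightarrow> real \<Rightarrow> complex" where
  "remainder v S t = (1 + of_real (\<sigma> * t)) powr v -
     (\<Sum>s<S. laplace_coeff v s * of_real ((\<sigma> * gauss_var t) ^ s * gauss_var' t))"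

lemma remainder_0: "S > 0 \<Longrightarrow> remainder v S 0 = 0"
  by (cases S) (simp_all add: remainder_def gauss_var'_def lagrange_coeff_def lessThan_Suc_eq_insert_0
      sum.reindex zero_power)

lemma remainder_eq_binomial_remainder:
  obtains d where "0 < d"
    "\<And>t. 0 < t \<Longrightarrow> t < d \<Longrightarrow> remainder v S t = binomial_remainder v S (of_real (\<sigma> * t))"
proof -
  obtain d where d: "0 < d" "d \<le> 1/2"
    "\<And>t. 0 < t \<Longrightarrow> t < d \<Longrightarrow> deriv gauss_coord (of_real (\<sigma> * t)) = of_real (gauss_var' t)"
    using deriv_gauss_coord_sign by blast
  have "remainder v S t = binomial_remainder v S (of_real (\<sigma> * t))" if t: "0 < t" "t < d" for t
  proof -
    have "gauss_coord (of_real \<sigma> * of_real t) = of_real \<sigma> * of_real (gauss_var t)"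
      using gauss_coord_sign[of t] t d by simp
    then show ?thesis
      using d(3)[OF t] by (simp add: remainder_def binomial_remainder_def)
  qed
  with d(1) show thesis by (rule that)
qed

lemma continuous_on_remainder:
  assumes "a > 0"
  shows "continuous_on {a..1/2} (remainder v S)"
proof -
  have "continuous_on {a..1/2} (\<lambda>t. t / ((1 + \<sigma> * t) * gauss_var t))"
    using assms one_plus_sign_pos gauss_var_pos
    by (intro continuous_intros continuous_on_subset[OF continuous_on_gauss_var])
       (force simp: less_le)+
  also have "?this \<longleftrightarrow> continuous_on {a..1/2} gauss_var'"
    using assms by (intro continuous_on_cong) (auto simp: gauss_var'_def)
  finally have "continuous_on {a..1/2} gauss_var'" .
  moreover have pos: "\<forall>t\<in>{a..1/2}. 0 < 1 + \<sigma> * t"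
    using assms one_plus_sign_pos by force
  moreover have "1 + complex_of_real \<sigma> * of_real t \<noteq> 0" if "t \<in> {a..1/2}" for t
  proof -
    have "1 + complex_of_real \<sigma> * of_real t = of_real (1 + \<sigma> * t)" by simp
    then show ?thesis using pos that by (metis of_real_eq_0_iff less_irrefl)
  qed
  ultimately show ?thesis
    unfolding remainder_def[abs_def] using assms
    by (intro continuous_intros continuous_on_subset[OF continuous_on_gauss_var]) auto
qed

lemma remainder_bound_near_0:
  obtains c d where "0 < d"
    "\<And>t. 0 < t \<Longrightarrow> t < d \<Longrightarrow> norm (remainder v S t) \<le> c * t ^ S"
proof -
  obtain c where "eventually (\<lambda>z. norm (binomial_remainder v S z) \<le> c * norm (z ^ S)) (at 0)"
    using binomial_remainder_bigo[of v S] by (elim landau_o.bigE) blast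
  then obtain d1 where d1: "d1 > 0"
    "\<And>z. z \<noteq> 0 \<Longrightarrow> dist z 0 < d1 \<Longrightarrow> norm (binomial_remainder v S z) \<le> c * norm (z ^ S)"
    by (auto simp: eventually_at)
  obtain d2 where d2: "0 < d2"
    "\<And>t. 0 < t \<Longrightarrow> t < d2 \<Longrightarrow> remainder v S t = binomial_remainder v S (of_real (\<sigma> * t))"
    using remainder_eq_binomial_remainder by blast
  have "norm (remainder v S t) \<le> c * t ^ S" if "0 < t" "t < min d1 d2" for t
    using that d1(2)[of "of_real (\<sigma> * t)"] d2(2)[of t]
    by (simp add: dist_0_norm norm_power norm_mult del: of_real_mult)
  with d1(1) d2(1) show thesis
    by (intro that[of "min d1 d2"]) auto
qed

lemma remainder_bound:
  assumes "S > 0"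
  obtains C where "C \<ge> 0" "\<And>t. t \<in> {0..1/2} \<Longrightarrow> norm (remainder v S t) \<le> C * t ^ S"
proof -
  obtain c d where d: "0 < d"
    and near_0: "\<And>t. 0 < t \<Longrightarrow> t < d \<Longrightarrow> norm (remainder v S t) \<le> c * t ^ S"
    using remainder_bound_near_0 by blast
  obtain M where M: "\<And>t. t \<in> {d..1/2} \<Longrightarrow> norm (remainder v S t) \<le> M"
    using compact_continuous_image[OF continuous_on_remainder[OF d, of v S] compact_Icc]
    by (metis compact_imp_bounded bounded_iff image_eqI)
  define C where "C = \<bar>c\<bar> + \<bar>M\<bar> / d ^ S"
  have C: "\<bar>c\<bar> \<le> C" "\<bar>M\<bar> / d ^ S \<le> C"
    using d by (simp_all add: C_def)
  have "norm (remainder v S t) \<le> C * t ^ S" if t: "t \<in> {0..1/2}" for t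
  proof -
    consider "t = 0" | "0 < t" "t < d" | "d \<le> t"
      using t by force
    then show ?thesis
    proof cases
      case 1
      then show ?thesis using remainder_0[OF assms] assms by (simp add: zero_power)
    next
      case 2
      then have "norm (remainder v S t) \<le> c * t ^ S"
        by (rule near_0)
      also have "\<dots> \<le> C * t ^ S"
        using 2 C by (intro mult_right_mono) auto
      finally show ?thesis .
    next
      case 3
      then have "norm (remainder v S t) \<le> \<bar>M\<bar> / d ^ S * d ^ S"
        using M t d by force
      also have "\<dots> \<le> C * t ^ S"
        using 3 d C by (intro mult_mono power_mono) auto
      finally show ?thesis .
    qed
  qed
  moreover have "C \<ge> 0"
    using C(1) abs_ge_zero[of c] by linarith
  ultimately show thesis
    using that by blast
qed

lemma laplace_integrand_side:
  assumes t: "t \<in> {0..1/2}"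
  shows "laplace_integrand v n (1 + \<sigma> * t) =
      of_real (exp (- (n/2) * (gauss_var t)\<^sup>2)) * remainder v S t +
      (\<Sum>s<S. laplace_coeff v s * of_real \<sigma> ^ s *
         of_real (gauss_var' t * (exp (- (n/2) * (gauss_var t)\<^sup>2) * gauss_var t ^ s)))"
proof -
  have "real n * (1 - (1 + \<sigma> * t) + ln (1 + \<sigma> * t)) = - (n/2) * (gauss_var t)\<^sup>2"
    unfolding gauss_var_square[OF t] phi_def by (simp add: algebra_simps)
  then have "laplace_integrand v n (1 + \<sigma> * t) =
      of_real (exp (- (n/2) * (gauss_var t)\<^sup>2)) * (1 + of_real (\<sigma> * t)) powr v"
    by (simp add: laplace_integrand_def)
  also have "(1 + of_real (\<sigma> * t)) powr v = remainder v S t +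
      (\<Sum>s<S. laplace_coeff v s * of_real ((\<sigma> * gauss_var t) ^ s * gauss_var' t))"
    by (simp add: remainder_def)
  finally show ?thesis
    by (simp add: algebra_simps sum_distrib_left power_mult_distrib)
qed

lemma has_integral_gauss_var_substitution:
  "((\<lambda>t. gauss_var' t * (exp (- a * (gauss_var t)\<^sup>2) * gauss_var t ^ s)) has_integral
      integral {0..gauss_var (1/2)} (\<lambda>w. exp (- a * w\<^sup>2) * w ^ s)) {0..1/2}"
proof -
  obtain D where D: "\<And>t. t \<in> {0..1/2} \<Longrightarrow> \<bar>gauss_var t\<bar> \<le> D"
    using compact_continuous_image[OF continuous_on_gauss_var compact_Icc]
    by (metis compact_imp_bounded bounded_iff image_eqI real_norm_def)
  have "((\<lambda>t. gauss_var' t *\<^sub>R (exp (- a * (gauss_var t)\<^sup>2) * gauss_var t ^ s)) has_integral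
      integral {gauss_var 0..gauss_var (1/2)} (\<lambda>w. exp (- a * w\<^sup>2) * w ^ s) -
      integral {gauss_var (1/2)..gauss_var 0} (\<lambda>w. exp (- a * w\<^sup>2) * w ^ s)) {0..1/2}"
  proof (rule has_integral_substitution_general[where s = "{0}" and a = 0 and b = "1/2" and c = "-D"
        and d = D and g = gauss_var and g' = gauss_var' and f = "\<lambda>w. exp (- a * w\<^sup>2) * w ^ s"])
    show "gauss_var ` {0..1/2} \<subseteq> {-D..D}"
      using D by (force simp: abs_le_iff)
    show "continuous_on {-D..D} (\<lambda>w. exp (- a * w\<^sup>2) * w ^ s)"
      by (intro continuous_intros)
    show "\<And>t. t \<in> {0..1/2} - {0} \<Longrightarrow> (gauss_var has_real_derivative gauss_var' t) (at t within {0..1/2})"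
      by (rule has_field_derivative_at_within, rule gauss_var_has_derivative) auto
  qed (simp_all add: continuous_on_gauss_var)
  moreover have "{gauss_var (1/2)..gauss_var 0} = {}"
    using gauss_var_pos[of "1/2"] by auto
  ultimately show ?thesis
    by simp
qed

lemma has_integral_remainder_term:
  "((\<lambda>t. of_real (exp (- (n/2) * (gauss_var t)\<^sup>2)) * remainder v S t) has_integral
      integral {0..1/2} (\<lambda>t. laplace_integrand v n (1 + \<sigma> * t)) -
      (\<Sum>s<S. laplace_coeff v s * of_real \<sigma> ^ s *
         of_real (integral {0..gauss_var (1/2)} (\<lambda>w. exp (- (n/2) * w\<^sup>2) * w ^ s)))) {0..1/2}"
proof -
  have "continuous_on {0..1/2} (\<lambda>t. laplace_integrand v n (1 + \<sigma> * t))"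
    using one_plus_sign_pos
    by (intro continuous_on_compose2[OF continuous_on_laplace_integrand] continuous_intros) auto
  then have F: "((\<lambda>t. laplace_integrand v n (1 + \<sigma> * t)) has_integral
      integral {0..1/2} (\<lambda>t. laplace_integrand v n (1 + \<sigma> * t))) {0..1/2}"
    by (intro integrable_integral integrable_continuous_interval)
  have G: "((\<lambda>t. \<Sum>s<S. laplace_coeff v s * of_real \<sigma> ^ s *
         of_real (gauss_var' t * (exp (- (n/2) * (gauss_var t)\<^sup>2) * gauss_var t ^ s))) has_integral
      (\<Sum>s<S. laplace_coeff v s * of_real \<sigma> ^ s *
         of_real (integral {0..gauss_var (1/2)} (\<lambda>w. exp (- (n/2) * w\<^sup>2) * w ^ s)))) {0..1/2}"
    by (intro has_integral_sum finite_lessThan has_integral_mult_right has_integral_of_real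
        has_integral_gauss_var_substitution)
  show ?thesis
  proof (rule has_integral_eq[OF _ has_integral_diff[OF F G]])
    fix t :: real assume t: "t \<in> {0..1/2}"
    show "laplace_integrand v n (1 + \<sigma> * t) - (\<Sum>s<S. laplace_coeff v s * of_real \<sigma> ^ s *
         of_real (gauss_var' t * (exp (- (n/2) * (gauss_var t)\<^sup>2) * gauss_var t ^ s)))
        = of_real (exp (- (n/2) * (gauss_var t)\<^sup>2)) * remainder v S t"
      using laplace_integrand_side[OF t, of v n S] by simp
  qed
qed

lemma integral_remainder_term_bigo:
  assumes "S > 0"
  shows "(\<lambda>n. integral {0..1/2} (\<lambda>t. of_real (exp (- (n/2) * (gauss_var t)\<^sup>2)) * remainder v S t))
           \<in> O(\<lambda>n. of_real (1 / real n powr ((real S + 1) / 2)))"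
proof -
  obtain C where C: "C \<ge> 0" "\<And>t. t \<in> {0..1/2} \<Longrightarrow> norm (remainder v S t) \<le> C * t ^ S"
    using remainder_bound[OF assms] by blast
  have "norm (integral {0..1/2} (\<lambda>t. of_real (exp (- (n/2) * (gauss_var t)\<^sup>2)) * remainder v S t))
      \<le> C * gauss_moment S (1/3) * norm (complex_of_real (1 / real n powr ((real S + 1) / 2)))"
    if n: "n \<ge> 1" for n :: nat
  proof -
    have "norm (integral {0..1/2} (\<lambda>t. of_real (exp (- (n/2) * (gauss_var t)\<^sup>2)) * remainder v S t))
        \<le> integral {0..1/2} (\<lambda>t. C * (exp (- (n/3) * t\<^sup>2) * t ^ S))"
    proof (rule integral_norm_bound_integral)
      show "(\<lambda>t. of_real (exp (- (n/2) * (gauss_var t)\<^sup>2)) * remainder v S t) integrable_on {0..1/2}"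
        using has_integral_remainder_term by blast
      show "(\<lambda>t. C * (exp (- (n/3) * t\<^sup>2) * t ^ S)) integrable_on {0..1/2}"
        by (intro integrable_continuous_interval continuous_intros)
      fix t :: real assume t: "t \<in> {0..1/2}"
      have "real n * (t\<^sup>2 / 3) \<le> real n * phi (\<sigma> * t)"
        using phi_sign_ge[OF t] by (intro mult_left_mono) auto
      then have "exp (- (n/2) * (gauss_var t)\<^sup>2) \<le> exp (- (n/3) * t\<^sup>2)"
        by (simp add: gauss_var_square[OF t])
      then have "exp (- (n/2) * (gauss_var t)\<^sup>2) * norm (remainder v S t) \<le> exp (- (n/3) * t\<^sup>2) * (C * t ^ S)"
        using C(2)[OF t] by (intro mult_mono) auto
      then show "norm (of_real (exp (- (n/2) * (gauss_var t)\<^sup>2)) * remainder v S t)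
          \<le> C * (exp (- (n/3) * t\<^sup>2) * t ^ S)"
        by (simp add: norm_mult mult_ac)
    qed
    also have "\<dots> = C * integral {0..1/2} (\<lambda>t. exp (- (n/3) * t\<^sup>2) * t ^ S)"
      by (rule integral_mult_right)
    also have "\<dots> \<le> C * gauss_moment S (n/3)"
      using C(1) n by (intro mult_left_mono integral_gauss_truncated_le) auto
    also have "\<dots> = C * gauss_moment S (1/3) * norm (complex_of_real (1 / real n powr ((real S + 1) / 2)))"
      using n gauss_moment_scale[of "1/3" n S] by (simp add: norm_divide)
    finally show ?thesis .
  qed
  then show ?thesis
    by (intro bigoI eventually_mono[OF eventually_ge_at_top[of 1]])
qed

lemma laplace_side_expansion_moments:
  assumes "S > 0"
  shows "(\<lambda>n. integral {0..1/2} (\<lambda>t. laplace_integrand v n (1 + \<sigma> * t)) -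
            (\<Sum>s<S. laplace_coeff v s * of_real \<sigma> ^ s * of_real (gauss_moment s (real n / 2))))
         \<in> O(\<lambda>n. of_real (1 / real n powr ((real S + 1) / 2)))"
proof -
  define G where "G = gauss_var (1/2)"
  define trunc where "trunc s n = gauss_moment s (real n / 2) -
      integral {0..G} (\<lambda>w. exp (- (real n / 2) * w\<^sup>2) * w ^ s)" for s n
  have split: "integral {0..1/2} (\<lambda>t. laplace_integrand v n (1 + \<sigma> * t)) -
        (\<Sum>s<S. laplace_coeff v s * of_real \<sigma> ^ s * of_real (gauss_moment s (real n / 2)))
      = integral {0..1/2} (\<lambda>t. of_real (exp (- (n/2) * (gauss_var t)\<^sup>2)) * remainder v S t) -
        (\<Sum>s<S. laplace_coeff v s * of_real \<sigma> ^ s * of_real (trunc s n))" for n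
    using integral_unique[OF has_integral_remainder_term, of n v S]
    by (simp add: G_def trunc_def algebra_simps sum_subtractf)
  have "(\<lambda>n. of_real (trunc s n)) \<in> O(\<lambda>n. complex_of_real (1 / real n powr ((real S + 1) / 2)))" for s
    unfolding landau_o.big.of_real_iff trunc_def
    using gauss_var_pos[of "1/2"] by (intro gauss_truncation_bigo) (simp add: G_def)
  then have "(\<lambda>n. laplace_coeff v s * of_real \<sigma> ^ s * of_real (trunc s n))
      \<in> O(\<lambda>n. 1 * complex_of_real (1 / real n powr ((real S + 1) / 2)))" for s
    by (intro landau_o.big.mult bigo_const)
  then show ?thesis
    unfolding split using assms
    by (intro sum_in_bigo big_sum_in_bigo integral_remainder_term_bigo) auto
qed


lemma laplace_side_expansion:
  assumes "S > 0"
  shows "(\<lambda>n. integral {0..1/2} (\<lambda>t. laplace_integrand v n (1 + \<sigma> * t)) -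
            (\<Sum>s<S. of_real (Gamma ((real s + 1) / 2)) * of_real \<sigma> ^ s * beta s v
               / of_real (real n powr ((real s + 1) / 2))))
         \<in> O(\<lambda>n. of_real (1 / real n powr ((real S + 1) / 2)))"
proof -
  have "eventually (\<lambda>n.
      integral {0..1/2} (\<lambda>t. laplace_integrand v n (1 + \<sigma> * t)) -
        (\<Sum>s<S. laplace_coeff v s * of_real \<sigma> ^ s * of_real (gauss_moment s (real n / 2))) =
      integral {0..1/2} (\<lambda>t. laplace_integrand v n (1 + \<sigma> * t)) -
        (\<Sum>s<S. of_real (Gamma ((real s + 1) / 2)) * of_real \<sigma> ^ s * beta s v
           / of_real (real n powr ((real s + 1) / 2)))) at_top"
    using eventually_gt_at_top[of 0] by eventually_elim (simp add: Gamma_beta_term_eq_gauss_moment)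
  then show ?thesis
    using laplace_side_expansion_moments[OF assms, of v] by (rule landau_o.big.in_cong[THEN iffD1])
qed

end

theorem proposition4p1:
  fixes v :: complex and S :: nat
  assumes "S > 0"
  shows "(\<lambda>n::nat. integral {1/2..1} (\<lambda>z::real. complex_of_real (exp (real n * (1 - z + ln z))) * complex_of_real z powr v)
            - (\<Sum>s<S. complex_of_real (Gamma ((real s + 1) / 2)) * (-1)^s * beta s v
                 / complex_of_real (real n powr ((real s + 1) / 2))))
          \<in> O(\<lambda>n. complex_of_real (1 / real n powr ((real S + 1) / 2)))
       \<and> (\<lambda>n::nat. integral {1..3/2} (\<lambda>z::real. complex_of_real (exp (real n * (1 - z + ln z))) * complex_of_real z powr v)
            - (\<Sum>s<S. complex_of_real (Gamma ((real s + 1) / 2)) * beta s v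
                 / complex_of_real (real n powr ((real s + 1) / 2))))
          \<in> O(\<lambda>n. complex_of_real (1 / real n powr ((real S + 1) / 2)))"
proof -
  interpret left: laplace_side "-1"
    by unfold_locales simp
  interpret right: laplace_side 1
    by unfold_locales simp
  have left_integral: "integral {1/2..1} (laplace_integrand v n)
      = integral {0..1/2} (\<lambda>t. laplace_integrand v n (1 + (-1) * t))" for n
    using integral_reflect_shift_real[of 0 "1/2" "laplace_integrand v n" 1] by simp
  have right_integral: "integral {1..3/2} (laplace_integrand v n)
      = integral {0..1/2} (\<lambda>t. laplace_integrand v n (1 + 1 * t))" for n
    using integral_shift_real[of 0 "1/2" "laplace_integrand v n" 1] by simp
  show ?thesis
    using left.laplace_side_expansion[OF assms, of v, folded left_integral]
      right.laplace_side_expansion[OF assms, of v, folded right_integral]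
    unfolding laplace_integrand_def[abs_def] by simp
qed

end
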